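(* Let $N=2^\ell$ ($\ell$ a positive integer), $C_2\subseteq C_1\subseteq\mathbb{F}_2^n$ linear codes, $y_x,y_z\in\mathbb{F}_2^n$, and $Q=Q(C_1,C_2,y_x,y_z)$. For $b\in\mathbb{Z}_N^n$ let $b_{y_z}\in\mathbb{Z}_N^n$ be given by $(b_{y_z})_i=b_i$ if $(y_z)_i=0$ and $(b_{y_z})_i=-b_i$ if $(y_z)_i=1$. Then $U(b)$ fixes $Q$ (i.e. $U(b)Q=Q$) if and only if $U(b_{y_z})$ fixes $Q'=Q(C_1,C_2,0,0)$.
   Context: $\omega=e^{2\pi\mathbf{i}/N}$; for $a\in\mathbb{Z}_N$, $U(a)=\mathrm{diag}(1,\omega^a)$ in the computational basis $\{|0\rangle,|1\rangle\}$ of $\mathbb{C}^2$, and $U(b)=\bigotimes_{i=1}^nU(b_i)$ on $(\mathbb{C}^2)^{\otimes n}$. With $X,Z$ the Pauli matrices and $X(u)=\bigotimes X^{u_i}$, $Z(v)=\bigotimes Z^{v_i}$, the CSS code $Q(C_1,C_2,y_x,y_z)$ is the subspace of $(\mathbb{C}^2)^{\otimes n}$ stabilized by all operators $(-1)^{y_x\cdot u+y_z\cdot v}X(u)Z(v)$ with $u\in C_2$, $v\in C_1^\perp$. *)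

theory Defs
  imports Complex_Main
begin

text \<open>Vectors of F_2^n are functions nat \<Rightarrow> bool (True = 1) vanishing at indices \<ge> n.
  States of (C^2)^{\<otimes>n} are coefficient functions on the computational basis
  {|x\<rangle> : x \<in> F_2^n}, i.e. maps (nat \<Rightarrow> bool) \<Rightarrow> complex vanishing off bvec n.\<close>

definition bvec :: "nat \<Rightarrow> (nat \<Rightarrow> bool) set" where
  "bvec n = {x. \<forall>i. n \<le> i \<longrightarrow> \<not> x i}"

definition bxor :: "(nat \<Rightarrow> bool) \<Rightarrow> (nat \<Rightarrow> bool) \<Rightarrow> (nat \<Rightarrow> bool)" where
  "bxor x y = (\<lambda>i. x i \<noteq> y i)"

definition bdot :: "nat \<Rightarrow> (nat \<Rightarrow> bool) \<Rightarrow> (nat \<Rightarrow> bool) \<Rightarrow> bool" where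
  "bdot n x y = odd (card {i. i < n \<and> x i \<and> y i})"

definition linear_code :: "nat \<Rightarrow> (nat \<Rightarrow> bool) set \<Rightarrow> bool" where
  "linear_code n C \<longleftrightarrow> C \<subseteq> bvec n \<and> (\<lambda>_. False) \<in> C \<and> (\<forall>x\<in>C. \<forall>y\<in>C. bxor x y \<in> C)"

definition dual_code :: "nat \<Rightarrow> (nat \<Rightarrow> bool) set \<Rightarrow> (nat \<Rightarrow> bool) set" where
  "dual_code n C = {v \<in> bvec n. \<forall>c\<in>C. \<not> bdot n v c}"

definition sgn_bool :: "bool \<Rightarrow> complex" where
  "sgn_bool b = (if b then -1 else 1)"

definition hspace :: "nat \<Rightarrow> ((nat \<Rightarrow> bool) \<Rightarrow> complex) set" where
  "hspace n = {\<psi>. \<forall>x. x \<notin> bvec n \<longrightarrow> \<psi> x = 0}"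

text \<open>Action of (-1)^{y_x\<cdot>u + y_z\<cdot>v} X(u) Z(v): since X(u)Z(v)|x\<rangle> = (-1)^{v\<cdot>x}|x+u\<rangle>,
  the new coefficient at y is (-1)^{v\<cdot>(y+u)} times the old coefficient at y+u.\<close>
definition stab_op :: "nat \<Rightarrow> (nat \<Rightarrow> bool) \<Rightarrow> (nat \<Rightarrow> bool) \<Rightarrow> (nat \<Rightarrow> bool) \<Rightarrow> (nat \<Rightarrow> bool)
    \<Rightarrow> ((nat \<Rightarrow> bool) \<Rightarrow> complex) \<Rightarrow> ((nat \<Rightarrow> bool) \<Rightarrow> complex)" where
  "stab_op n yx yz u v \<psi> = (\<lambda>y. if y \<in> bvec n then
      sgn_bool (bdot n yx u \<noteq> bdot n yz v) * sgn_bool (bdot n v (bxor y u)) * \<psi> (bxor y u)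
     else 0)"

definition css_code :: "nat \<Rightarrow> (nat \<Rightarrow> bool) set \<Rightarrow> (nat \<Rightarrow> bool) set \<Rightarrow> (nat \<Rightarrow> bool) \<Rightarrow> (nat \<Rightarrow> bool)
    \<Rightarrow> ((nat \<Rightarrow> bool) \<Rightarrow> complex) set" where
  "css_code n C1 C2 yx yz = {\<psi> \<in> hspace n. \<forall>u\<in>C2. \<forall>v\<in>dual_code n C1. stab_op n yx yz u v \<psi> = \<psi>}"

definition omega :: "nat \<Rightarrow> complex" where
  "omega N = cis (2 * pi / real N)"

text \<open>U(b) = \<Otimes> diag(1, \<omega>^{b_i}); elements of Z_N are represented by integers
  (U(b) depends only on b mod N).\<close>
definition U_op :: "nat \<Rightarrow> nat \<Rightarrow> (nat \<Rightarrow> int) \<Rightarrow> ((nat \<Rightarrow> bool) \<Rightarrow> complex) \<Rightarrow> ((nat \<Rightarrow> bool) \<Rightarrow> complex)" where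
  "U_op N n b \<psi> = (\<lambda>x. omega N powi (\<Sum>i\<in>{i. i < n \<and> x i}. b i) * \<psi> x)"

definition b_flip :: "nat \<Rightarrow> (nat \<Rightarrow> int) \<Rightarrow> (nat \<Rightarrow> bool) \<Rightarrow> (nat \<Rightarrow> int)" where
  "b_flip N b yz = (\<lambda>i. if yz i then (- b i) mod int N else b i)"

end

theory Submission
  imports Defs
begin

text \<open>Conjugating the stabilisers of Q(C_1, C_2, 0, 0) by the Pauli operator Z(y_x) X(y_z)
  only changes their signs, and exactly into those of Q(C_1, C_2, y_x, y_z); hence
  Q = Z(y_x) X(y_z) Q'.  The diagonal operator U(b) commutes with Z(y_x), while
  U(b) X(y_z) = \<omega>^{b\<cdot>y_z} X(y_z) U(b_{y_z}) because flipping the bits where y_z is 1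
  replaces \<omega>^{b_i} by \<omega>^{-b_i} up to the global factor \<omega>^{b_i}.  The scalar does not move
  the subspace Q', so U(b) Q = Z(y_x) X(y_z) U(b_{y_z}) Q', and the invertible Pauli operator
  cancels from U(b) Q = Q.\<close>

lemma card_filter_less_Suc:
  "card {i. i < Suc n \<and> P i} = card {i. i < n \<and> P i} + (if P n then 1 else 0)"
proof -
  have "{i. i < Suc n \<and> P i} = {i. i < n \<and> P i} \<union> (if P n then {n} else {})"
    by (auto simp: less_Suc_eq)
  then show ?thesis
    by (auto simp: card_insert_if)
qed

lemma bdot_commute: "bdot n x y = bdot n y x"
  unfolding bdot_def by (simp add: conj_commute)

lemma bdot_bxor_right: "bdot n v (bxor x y) = (bdot n v x \<noteq> bdot n v y)"
proof (induction n)
  case 0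
  then show ?case by (simp add: bdot_def)
next
  case (Suc n)
  then show ?case
    unfolding bdot_def bxor_def card_filter_less_Suc by auto
qed

lemma bdot_bxor_left: "bdot n (bxor x y) v = (bdot n x v \<noteq> bdot n y v)"
  using bdot_bxor_right by (simp add: bdot_commute)

lemma bxor_bxor_cancel [simp]: "bxor (bxor x y) y = x"
  unfolding bxor_def by auto

lemma bxor_False_left [simp]: "bxor (\<lambda>_. False) y = y"
  unfolding bxor_def by simp

lemma bxor_in_bvec_iff: "y \<in> bvec n \<Longrightarrow> bxor x y \<in> bvec n \<longleftrightarrow> x \<in> bvec n"
  unfolding bvec_def bxor_def by auto

lemma sgn_bool_square [simp]: "sgn_bool a * sgn_bool a = 1"
  unfolding sgn_bool_def by auto

lemma image_eq_if_involution:
  assumes "\<And>x. x \<in> A \<Longrightarrow> f x \<in> B" and "\<And>x. x \<in> B \<Longrightarrow> f x \<in> A"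
    and "\<And>x. x \<in> B \<Longrightarrow> f (f x) = x"
  shows "f ` A = B"
  using assms by (auto intro!: image_eqI[where x = "f _"])

definition pauli_Z :: "nat \<Rightarrow> (nat \<Rightarrow> bool) \<Rightarrow> ((nat \<Rightarrow> bool) \<Rightarrow> complex) \<Rightarrow> ((nat \<Rightarrow> bool) \<Rightarrow> complex)"
  where "pauli_Z n a \<psi> = (\<lambda>y. if y \<in> bvec n then sgn_bool (bdot n a y) * \<psi> y else 0)"

definition pauli_X :: "nat \<Rightarrow> (nat \<Rightarrow> bool) \<Rightarrow> ((nat \<Rightarrow> bool) \<Rightarrow> complex) \<Rightarrow> ((nat \<Rightarrow> bool) \<Rightarrow> complex)"
  where "pauli_X n c \<psi> = (\<lambda>y. if y \<in> bvec n then \<psi> (bxor y c) else 0)"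

lemma pauli_Z_in_hspace: "pauli_Z n a \<psi> \<in> hspace n"
  unfolding pauli_Z_def hspace_def by simp

lemma pauli_X_in_hspace: "pauli_X n c \<psi> \<in> hspace n"
  unfolding pauli_X_def hspace_def by simp

lemma pauli_Z_involution: "\<psi> \<in> hspace n \<Longrightarrow> pauli_Z n a (pauli_Z n a \<psi>) = \<psi>"
  unfolding pauli_Z_def hspace_def by (auto simp: mult.assoc [symmetric])

lemma pauli_X_involution: "c \<in> bvec n \<Longrightarrow> \<psi> \<in> hspace n \<Longrightarrow> pauli_X n c (pauli_X n c \<psi>) = \<psi>"
  unfolding pauli_X_def hspace_def by (auto simp: bxor_in_bvec_iff)

lemma stab_op_pauli_Z:
  assumes "u \<in> bvec n"
  shows "stab_op n yx yz u v (pauli_Z n a \<psi>) = pauli_Z n a (stab_op n (bxor yx a) yz u v \<psi>)"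
  using assms unfolding stab_op_def pauli_Z_def
  by (auto simp: bxor_in_bvec_iff bdot_bxor_left bdot_bxor_right bdot_commute[of n a u]
      sgn_bool_def)

lemma stab_op_pauli_X:
  assumes "u \<in> bvec n" and "c \<in> bvec n"
  shows "stab_op n yx yz u v (pauli_X n c \<psi>) = pauli_X n c (stab_op n yx (bxor yz c) u v \<psi>)"
proof -
  have "bxor (bxor y u) c = bxor (bxor y c) u" for y
    unfolding bxor_def by auto
  then show ?thesis
    using assms unfolding stab_op_def pauli_X_def
    by (auto simp: bxor_in_bvec_iff bdot_bxor_left bdot_bxor_right bdot_commute[of n c v]
        sgn_bool_def)
qed

lemma css_code_subset_hspace: "css_code n C1 C2 yx yz \<subseteq> hspace n"
  unfolding css_code_def by auto

lemma css_code_scale: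
  assumes "c \<noteq> 0"
  shows "(\<lambda>\<psi> x. c * \<psi> x) ` css_code n C1 C2 yx yz = css_code n C1 C2 yx yz"
proof -
  have scaled: "(\<lambda>x. d * \<psi> x) \<in> css_code n C1 C2 yx yz" if "\<psi> \<in> css_code n C1 C2 yx yz" for d \<psi>
  proof -
    have "stab_op n yx yz u v (\<lambda>x. d * \<psi> x) = (\<lambda>x. d * stab_op n yx yz u v \<psi> x)" for u v
      unfolding stab_op_def by (auto simp: ac_simps)
    then show ?thesis
      using that unfolding css_code_def hspace_def by auto
  qed
  show ?thesis
  proof
    show "(\<lambda>\<psi> x. c * \<psi> x) ` css_code n C1 C2 yx yz \<subseteq> css_code n C1 C2 yx yz"
      by (rule image_subsetI) (rule scaled)
    show "css_code n C1 C2 yx yz \<subseteq> (\<lambda>\<psi> x. c * \<psi> x) ` css_code n C1 C2 yx yz"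
    proof
      fix \<psi> assume \<psi>: "\<psi> \<in> css_code n C1 C2 yx yz"
      have "\<psi> = (\<lambda>\<psi> x. c * \<psi> x) (\<lambda>x. inverse c * \<psi> x)"
        using assms by (simp add: fun_eq_iff)
      then show "\<psi> \<in> (\<lambda>\<psi> x. c * \<psi> x) ` css_code n C1 C2 yx yz"
        using scaled[OF \<psi>] by (rule image_eqI)
    qed
  qed
qed

lemma css_code_pauli_Z:
  assumes "C2 \<subseteq> bvec n"
  shows "pauli_Z n a ` css_code n C1 C2 yx yz = css_code n C1 C2 (bxor yx a) yz"
proof (rule image_eq_if_involution)
  have stab: "stab_op n w yz u v (pauli_Z n a \<psi>) = pauli_Z n a (stab_op n (bxor w a) yz u v \<psi>)"
    if "u \<in> C2" for w u v \<psi>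
    using that assms by (blast intro: stab_op_pauli_Z)
  show "pauli_Z n a \<psi> \<in> css_code n C1 C2 (bxor yx a) yz" if "\<psi> \<in> css_code n C1 C2 yx yz" for \<psi>
    using that unfolding css_code_def by (simp add: stab pauli_Z_in_hspace)
  show "pauli_Z n a \<psi> \<in> css_code n C1 C2 yx yz" if "\<psi> \<in> css_code n C1 C2 (bxor yx a) yz" for \<psi>
    using that unfolding css_code_def by (simp add: stab pauli_Z_in_hspace)
  show "pauli_Z n a (pauli_Z n a \<psi>) = \<psi>" if "\<psi> \<in> css_code n C1 C2 (bxor yx a) yz" for \<psi>
    using that css_code_subset_hspace by (blast intro: pauli_Z_involution)
qed

lemma css_code_pauli_X:
  assumes "C2 \<subseteq> bvec n" and "c \<in> bvec n"
  shows "pauli_X n c ` css_code n C1 C2 yx yz = css_code n C1 C2 yx (bxor yz c)"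
proof (rule image_eq_if_involution)
  have stab: "stab_op n yx w u v (pauli_X n c \<psi>) = pauli_X n c (stab_op n yx (bxor w c) u v \<psi>)"
    if "u \<in> C2" for w u v \<psi>
    using that assms by (blast intro: stab_op_pauli_X)
  show "pauli_X n c \<psi> \<in> css_code n C1 C2 yx (bxor yz c)" if "\<psi> \<in> css_code n C1 C2 yx yz" for \<psi>
    using that unfolding css_code_def by (simp add: stab pauli_X_in_hspace)
  show "pauli_X n c \<psi> \<in> css_code n C1 C2 yx yz" if "\<psi> \<in> css_code n C1 C2 yx (bxor yz c)" for \<psi>
    using that unfolding css_code_def by (simp add: stab pauli_X_in_hspace)
  show "pauli_X n c (pauli_X n c \<psi>) = \<psi>" if "\<psi> \<in> css_code n C1 C2 yx (bxor yz c)" for \<psi>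
    using that css_code_subset_hspace assms(2) by (blast intro: pauli_X_involution)
qed

lemma css_code_eq_pauli_image:
  assumes "C2 \<subseteq> bvec n" and "yz \<in> bvec n"
  shows "css_code n C1 C2 yx yz
    = pauli_Z n yx ` pauli_X n yz ` css_code n C1 C2 (\<lambda>_. False) (\<lambda>_. False)"
  using assms by (simp add: css_code_pauli_X css_code_pauli_Z)

lemma omega_nonzero [simp]: "omega N \<noteq> 0"
  unfolding omega_def by simp

lemma omega_power_N: "N > 0 \<Longrightarrow> omega N ^ N = 1"
  unfolding omega_def by (simp add: DeMoivre)

lemma omega_powi_eq_if_dvd:
  assumes "N > 0" and "int N dvd k - k'"
  shows "omega N powi k = omega N powi k'"
proof -
  obtain m where "k - k' = int N * m"
    using assms(2) by (rule dvdE)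
  then have k: "k = k' + int N * m"
    by simp
  have "omega N powi (int N * m) = 1"
    using omega_power_N[OF assms(1)]
    by (simp add: power_int_mult flip: power_int_of_nat)
  then show ?thesis
    unfolding k by (simp add: power_int_add)
qed

lemma sum_filter_lessThan:
  fixes n :: nat
  shows "(\<Sum>i\<in>{i. i < n \<and> x i}. f i) = (\<Sum>i<n. if x i then f i else (0 :: 'a :: comm_monoid_add))"
proof -
  have "{i. i < n \<and> x i} = {i \<in> {..<n}. x i}"
    by auto
  also have "sum f \<dots> = (\<Sum>i<n. if x i then f i else 0)"
    by (rule sum.inter_filter) simp
  finally show ?thesis .
qed

lemma b_flip_weight_dvd:
  "int N dvd (\<Sum>i\<in>{i. i < n \<and> y i}. b i) - (\<Sum>i\<in>{i. i < n \<and> c i}. b i)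
     - (\<Sum>i\<in>{i. i < n \<and> bxor y c i}. b_flip N b c i)"
proof -
  have "int N dvd (if y i then b i else 0) - (if c i then b i else 0)
      - (if bxor y c i then b_flip N b c i else 0)" for i
    using dvd_minus_mod[of "- b i" "int N"] by (auto simp: bxor_def b_flip_def)
  then show ?thesis
    unfolding sum_filter_lessThan by (simp add: dvd_sum flip: sum_subtractf)
qed

lemma U_op_pauli_Z: "U_op N n b (pauli_Z n a \<psi>) = pauli_Z n a (U_op N n b \<psi>)"
  unfolding U_op_def pauli_Z_def by (auto simp: ac_simps)

lemma U_op_pauli_X:
  assumes "N > 0"
  shows "U_op N n b (pauli_X n c \<psi>)
    = pauli_X n c (U_op N n (b_flip N b c) (\<lambda>x. omega N powi (\<Sum>i\<in>{i. i < n \<and> c i}. b i) * \<psi> x))"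
proof -
  let ?w = "\<lambda>b x. \<Sum>i\<in>{i. i < n \<and> x i}. b i"
  have weight: "omega N powi ?w b y
      = omega N powi ?w (b_flip N b c) (bxor y c) * omega N powi ?w b c" for y
  proof -
    have "omega N powi ?w b y = omega N powi (?w b y - ?w b c) * omega N powi ?w b c"
      by (simp flip: power_int_add)
    also have "omega N powi (?w b y - ?w b c) = omega N powi ?w (b_flip N b c) (bxor y c)"
      using assms b_flip_weight_dvd by (rule omega_powi_eq_if_dvd)
    finally show ?thesis .
  qed
  show ?thesis
  proof
    fix y
    show "U_op N n b (pauli_X n c \<psi>) y
      = pauli_X n c (U_op N n (b_flip N b c) (\<lambda>x. omega N powi ?w b c * \<psi> x)) y"
      unfolding U_op_def pauli_X_def using weight[of y] by (simp add: ac_simps)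
  qed
qed

lemma U_op_image_hspace: "\<Psi> \<subseteq> hspace n \<Longrightarrow> U_op N n b ` \<Psi> \<subseteq> hspace n"
  unfolding U_op_def hspace_def by auto

theorem proposition2p7:
  fixes l n :: nat and N :: nat and C1 C2 :: "(nat \<Rightarrow> bool) set"
    and yx yz :: "nat \<Rightarrow> bool" and b :: "nat \<Rightarrow> int"
  assumes "l \<ge> 1" and "N = 2 ^ l"
    and "linear_code n C1" and "linear_code n C2" and "C2 \<subseteq> C1"
    and "yx \<in> bvec n" and "yz \<in> bvec n"
    and "\<forall>i<n. b i \<in> {0..<int N}"
  shows "U_op N n b ` css_code n C1 C2 yx yz = css_code n C1 C2 yx yz
     \<longleftrightarrow> U_op N n (b_flip N b yz) ` css_code n C1 C2 (\<lambda>_. False) (\<lambda>_. False)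
           = css_code n C1 C2 (\<lambda>_. False) (\<lambda>_. False)"
proof -
  define Q' where "Q' = css_code n C1 C2 (\<lambda>_. False) (\<lambda>_. False)"
  define P where "P = pauli_Z n yx \<circ> pauli_X n yz"
  have "N > 0" and "C2 \<subseteq> bvec n"
    using assms(2,4) unfolding linear_code_def by auto
  then have Q: "css_code n C1 C2 yx yz = P ` Q'"
    unfolding P_def Q'_def by (simp add: css_code_eq_pauli_image[OF _ assms(7)] image_comp)
  define \<kappa> where "\<kappa> = omega N powi (\<Sum>i\<in>{i. i < n \<and> yz i}. b i)"
  have "U_op N n b ` P ` Q' = P ` U_op N n (b_flip N b yz) ` (\<lambda>\<psi> x. \<kappa> * \<psi> x) ` Q'"
    unfolding P_def \<kappa>_def by (simp add: image_comp comp_def U_op_pauli_Z U_op_pauli_X[OF \<open>N > 0\<close>])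
  also have "\<dots> = P ` U_op N n (b_flip N b yz) ` Q'"
    unfolding Q'_def \<kappa>_def by (simp add: css_code_scale)
  finally have UQ: "U_op N n b ` P ` Q' = P ` U_op N n (b_flip N b yz) ` Q'" .
  have "inj_on P (hspace n)"
    unfolding P_def using assms(7)
    by (intro comp_inj_on inj_on_inverseI[of _ "pauli_Z n yx"] inj_on_inverseI[of _ "pauli_X n yz"])
      (auto simp: pauli_Z_involution pauli_X_involution pauli_X_in_hspace)
  then have "P ` U_op N n (b_flip N b yz) ` Q' = P ` Q' \<longleftrightarrow> U_op N n (b_flip N b yz) ` Q' = Q'"
    unfolding Q'_def by (simp add: inj_on_image_eq_iff U_op_image_hspace css_code_subset_hspace)
  then show ?thesis
    by (simp only: Q UQ flip: Q'_def)
qed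

end
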